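(* For every integer $k\ge 2$ and every positive integer $n$, \[ \mathrm{ex}_3\big(n, C^{(3)}_{2k}\big)\le t_{2k}(n)+\mathrm{ex}(n,C_{2k}). \]
   Context: A Berge cycle of length $m$ in a hypergraph is a family of $m$ distinct hyperedges $H_0,\dots,H_{m-1}$ for which there exist distinct vertices $v_0,\dots,v_{m-1}$ with $\{v_i,v_{i+1}\}\subset H_i$ for $0\le i\le m-1$ (indices mod $m$). $\mathrm{ex}_3(n,C^{(3)}_m)$ is the maximum number of hyperedges in a 3-uniform hypergraph on $n$ vertices with no Berge cycle of length $m$. $\mathrm{ex}(n,C_{2k})$ is the maximum number of edges of a simple graph on $n$ vertices with no cycle of length $2k$. $t_\ell(n)$ is the maximum number of triangles in a simple graph on $n$ vertices containing no cycle of length $\ell$. *)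

theory Defs
  imports Main
begin

definition hypergraph3 :: "nat \<Rightarrow> nat set set \<Rightarrow> bool" where
  "hypergraph3 n H \<longleftrightarrow> (\<forall>e\<in>H. e \<subseteq> {..<n} \<and> card e = 3)"

definition simple_graph :: "nat \<Rightarrow> nat set set \<Rightarrow> bool" where
  "simple_graph n G \<longleftrightarrow> (\<forall>e\<in>G. e \<subseteq> {..<n} \<and> card e = 2)"

definition has_berge_cycle :: "nat set set \<Rightarrow> nat \<Rightarrow> bool" where
  "has_berge_cycle H m \<longleftrightarrow>
     (\<exists>(v :: nat \<Rightarrow> nat) (E :: nat \<Rightarrow> nat set).
        inj_on v {..<m} \<and> inj_on E {..<m} \<and>
        (\<forall>i<m. E i \<in> H \<and> {v i, v ((i + 1) mod m)} \<subseteq> E i))"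

definition has_cycle :: "nat set set \<Rightarrow> nat \<Rightarrow> bool" where
  "has_cycle G m \<longleftrightarrow>
     (\<exists>v :: nat \<Rightarrow> nat. inj_on v {..<m} \<and> (\<forall>i<m. {v i, v ((i + 1) mod m)} \<in> G))"

definition num_triangles :: "nat set set \<Rightarrow> nat" where
  "num_triangles G = card {T. card T = 3 \<and> (\<forall>x\<in>T. \<forall>y\<in>T. x \<noteq> y \<longrightarrow> {x, y} \<in> G)}"

definition ex3_berge :: "nat \<Rightarrow> nat \<Rightarrow> nat" where
  "ex3_berge n m = Max {card H | H. hypergraph3 n H \<and> \<not> has_berge_cycle H m}"

definition ex_cycle :: "nat \<Rightarrow> nat \<Rightarrow> nat" where
  "ex_cycle n m = Max {card G | G. simple_graph n G \<and> \<not> has_cycle G m}"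

definition t_cycle :: "nat \<Rightarrow> nat \<Rightarrow> nat" where
  "t_cycle l n = Max {num_triangles G | G. simple_graph n G \<and> \<not> has_cycle G l}"

end

theory Submission
  imports Defs
begin

text \<open>Match hyperedges to pairs they contain, distinct hyperedges to distinct pairs, with as
many matched hyperedges as possible. The matched pairs form a graph \<open>G\<close> with one edge per
matched hyperedge. By maximality every pair inside an unmatched hyperedge is already in \<open>G\<close>,
so unmatched hyperedges are triangles of \<open>G\<close>. A cycle of length \<open>m\<close> in \<open>G\<close> lifts along the
matching to a Berge cycle of length \<open>m\<close>, so \<open>G\<close> has no such cycle, and
\<open>|H| \<le> #triangles(G) + |G| \<le> t\<^sub>m(n) + ex(n, C\<^sub>m)\<close>.\<close>

lemma inj_on_cycle_edges:
  fixes v :: "nat \<Rightarrow> 'a"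
  assumes m: "m \<ge> 3" and inj: "inj_on v {..<m}"
  shows "inj_on (\<lambda>i. {v i, v ((i + 1) mod m)}) {..<m}"
proof (rule inj_onI, rule ccontr)
  fix i j assume "i \<in> {..<m}" "j \<in> {..<m}" and ne: "i \<noteq> j"
    and eq: "{v i, v ((i + 1) mod m)} = {v j, v ((j + 1) mod m)}"
  then have i: "i < m" and j: "j < m" by auto
  have "v i \<noteq> v j" using inj ne i j by (meson inj_on_contraD lessThan_iff)
  then have "v i = v ((j + 1) mod m)" and "v ((i + 1) mod m) = v j"
    using eq by (auto simp: doubleton_eq_iff)
  then have a: "i = (j + 1) mod m" and b: "(i + 1) mod m = j"
    using inj i j by (auto dest: inj_onD)
  have "j = Suc i \<or> (i = m - 1 \<and> j = 0)"
    using b i by (cases "Suc i = m") auto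
  moreover have "i = Suc j \<or> (j = m - 1 \<and> i = 0)"
    using a j by (cases "Suc j = m") auto
  ultimately show False using m by auto
qed

lemma triangle_subset_vertices:
  assumes G: "simple_graph n G" and T: "card T = 3" "\<forall>x\<in>T. \<forall>y\<in>T. x \<noteq> y \<longrightarrow> {x, y} \<in> G"
  shows "T \<subseteq> {..<n}"
proof
  fix x assume x: "x \<in> T"
  obtain y where "y \<in> T" "y \<noteq> x"
    using T(1) by (auto simp: card_3_iff)
  then have "{x, y} \<in> G" using T(2) x by auto
  then show "x \<in> {..<n}" using G unfolding simple_graph_def by auto
qed

lemma finite_triangles:
  assumes "simple_graph n G"
  shows "finite {T. card T = 3 \<and> (\<forall>x\<in>T. \<forall>y\<in>T. x \<noteq> y \<longrightarrow> {x, y} \<in> G)}"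
  by (rule finite_subset[of _ "Pow {..<n}"]) (use triangle_subset_vertices[OF assms] in auto)

lemma num_triangles_le_pow:
  assumes "simple_graph n G"
  shows "num_triangles G \<le> 2 ^ n"
proof -
  have "num_triangles G \<le> card (Pow {..<n})"
    unfolding num_triangles_def
    using triangle_subset_vertices[OF assms] by (intro card_mono) auto
  then show ?thesis by (simp add: card_Pow)
qed

lemma card_simple_graph_le_pow:
  assumes "simple_graph n G"
  shows "card G \<le> 2 ^ n"
proof -
  have "card G \<le> card (Pow {..<n})"
    using assms unfolding simple_graph_def by (intro card_mono) auto
  then show ?thesis by (simp add: card_Pow)
qed

lemma le_Max_of_bounded:
  fixes f :: "'a \<Rightarrow> nat"
  assumes "P x" and "\<And>y. P y \<Longrightarrow> f y \<le> b"
  shows "f x \<le> Max {f y | y. P y}"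
proof (rule Max_ge)
  show "finite {f y | y. P y}"
    using assms(2) by (auto intro: finite_subset[of _ "{..b}"])
qed (use assms(1) in blast)

lemma Max_of_bounded_le:
  fixes f :: "'a \<Rightarrow> nat"
  assumes "P x" and "\<And>y. P y \<Longrightarrow> f y \<le> b"
  shows "Max {f y | y. P y} \<le> b"
proof -
  have "finite {f y | y. P y}"
    using assms(2) by (auto intro: finite_subset[of _ "{..b}"])
  then show ?thesis using assms by (intro Max.boundedI) auto
qed

lemma num_triangles_le_t_cycle:
  assumes "simple_graph n G" and "\<not> has_cycle G m"
  shows "num_triangles G \<le> t_cycle m n"
  unfolding t_cycle_def
  by (rule le_Max_of_bounded[where b = "2 ^ n"]) (use assms num_triangles_le_pow in auto)

lemma card_le_ex_cycle:
  assumes "simple_graph n G" and "\<not> has_cycle G m"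
  shows "card G \<le> ex_cycle n m"
  unfolding ex_cycle_def
  by (rule le_Max_of_bounded[where b = "2 ^ n"]) (use assms card_simple_graph_le_pow in auto)

definition pair_matching :: "'a set set \<Rightarrow> ('a set \<times> 'a set) set \<Rightarrow> bool" where
  "pair_matching H M \<longleftrightarrow>
     (\<forall>(h, e)\<in>M. h \<in> H \<and> e \<subseteq> h \<and> card e = 2) \<and> inj_on fst M \<and> inj_on snd M"

lemma finite_pair_matching:
  assumes "finite (\<Union>H)" and "pair_matching H M"
  shows "finite M"
proof (rule finite_subset)
  show "M \<subseteq> Pow (\<Union>H) \<times> Pow (\<Union>H)"
    using assms(2) unfolding pair_matching_def by fastforce
qed (use assms(1) in simp)

lemma ex_maximum_pair_matching:
  assumes "finite (\<Union>H)"
  obtains M where "pair_matching H M" and "\<And>M'. pair_matching H M' \<Longrightarrow> card M' \<le> card M"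
proof -
  let ?B = "Pow (\<Union>H) \<times> Pow (\<Union>H)"
  have "pair_matching H {}" unfolding pair_matching_def by simp
  moreover have "\<forall>M. pair_matching H M \<longrightarrow> card M < Suc (card ?B)"
  proof (intro allI impI)
    fix M assume "pair_matching H M"
    then have "M \<subseteq> ?B" unfolding pair_matching_def by fastforce
    with assms have "card M \<le> card ?B" by (intro card_mono) simp_all
    then show "card M < Suc (card ?B)" by simp
  qed
  ultimately obtain M where "pair_matching H M" and "\<forall>M'. pair_matching H M' \<longrightarrow> card M' \<le> card M"
    using ex_has_greatest_nat[of "pair_matching H" "{}" card] by blast
  then show ?thesis using that by blast
qed

lemma maximum_pair_matching_covers:
  assumes fin: "finite (\<Union>H)" and M: "pair_matching H M"
    and max: "\<And>M'. pair_matching H M' \<Longrightarrow> card M' \<le> card M"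
    and h: "h \<in> H" "h \<notin> fst ` M" and e: "e \<subseteq> h" "card e = 2"
  shows "e \<in> snd ` M"
proof (rule ccontr)
  assume "e \<notin> snd ` M"
  moreover have "(h, e) \<notin> M" using h(2) by (metis fst_conv image_eqI)
  ultimately have "inj_on fst (insert (h, e) M)" and "inj_on snd (insert (h, e) M)"
    using M h(2) unfolding pair_matching_def by (simp_all add: inj_on_insert)
  then have "pair_matching H (insert (h, e) M)"
    using M h e unfolding pair_matching_def by simp
  then have "card (insert (h, e) M) \<le> card M" by (rule max)
  then show False
    using \<open>(h, e) \<notin> M\<close> finite_pair_matching[OF fin M] by simp
qed

lemma pair_matching_lifts_cycle:
  assumes M: "pair_matching H M" and m: "m \<ge> 3" and C: "has_cycle (snd ` M) m"
  shows "has_berge_cycle H m"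
proof -
  obtain v where v: "inj_on v {..<m}" and edges: "\<forall>i<m. {v i, v ((i + 1) mod m)} \<in> snd ` M"
    using C unfolding has_cycle_def by auto
  define e where "e i = {v i, v ((i + 1) mod m)}" for i
  have "\<forall>i\<in>{..<m}. \<exists>h. (h, e i) \<in> M" using edges unfolding e_def by force
  from bchoice[OF this] obtain E where E: "\<And>i. i < m \<Longrightarrow> (E i, e i) \<in> M" by blast
  have "inj_on fst M" using M unfolding pair_matching_def by simp
  have "inj_on E {..<m}"
  proof (rule inj_onI)
    fix i j assume "i \<in> {..<m}" "j \<in> {..<m}" and "E i = E j"
    then have i: "i < m" and j: "j < m" by auto
    have "(E i, e i) = (E j, e j)"
      using inj_onD[OF \<open>inj_on fst M\<close> _ E[OF i] E[OF j]] \<open>E i = E j\<close> by simp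
    then show "i = j"
      using inj_on_cycle_edges[OF m v] i j unfolding e_def by (auto dest: inj_onD)
  qed
  moreover have "\<forall>i<m. E i \<in> H \<and> {v i, v ((i + 1) mod m)} \<subseteq> E i"
    using E M unfolding pair_matching_def e_def by fastforce
  ultimately show ?thesis unfolding has_berge_cycle_def using v by blast
qed

lemma berge_cycle_free_card_le:
  assumes H: "hypergraph3 n H" and m: "m \<ge> 3" and free: "\<not> has_berge_cycle H m"
  shows "\<exists>G. simple_graph n G \<and> \<not> has_cycle G m \<and> card H \<le> num_triangles G + card G"
proof -
  have finU: "finite (\<Union>H)" and finH: "finite H"
    using H unfolding hypergraph3_def
    by (auto intro: finite_subset[of _ "{..<n}"] finite_subset[of _ "Pow {..<n}"])
  obtain M where M: "pair_matching H M" and max: "\<And>M'. pair_matching H M' \<Longrightarrow> card M' \<le> card M"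
    using ex_maximum_pair_matching[OF finU] by blast
  define G where "G = snd ` M"
  define D where "D = fst ` M"
  have DH: "D \<subseteq> H" using M unfolding D_def pair_matching_def by auto
  have G: "simple_graph n G" unfolding simple_graph_def G_def
  proof
    fix e assume "e \<in> snd ` M"
    then obtain h where "(h, e) \<in> M" by force
    with M H show "e \<subseteq> {..<n} \<and> card e = 2"
      unfolding pair_matching_def hypergraph3_def by blast
  qed
  have "card D = card G"
    using M unfolding D_def G_def pair_matching_def by (simp add: card_image)
  have "H - D \<subseteq> {T. card T = 3 \<and> (\<forall>x\<in>T. \<forall>y\<in>T. x \<noteq> y \<longrightarrow> {x, y} \<in> G)}"
    using H maximum_pair_matching_covers[OF finU M max] unfolding D_def G_def hypergraph3_def
    by auto
  then have "card (H - D) \<le> num_triangles G"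
    unfolding num_triangles_def
    by (rule card_mono[OF finite_triangles[OF G]])
  moreover have "card H = card D + card (H - D)"
    using finH DH by (metis card_Diff_subset card_mono finite_subset le_add_diff_inverse)
  moreover have "\<not> has_cycle G m"
    using pair_matching_lifts_cycle[OF M m] free unfolding G_def by blast
  ultimately show ?thesis using G \<open>card D = card G\<close> by auto
qed

lemma no_berge_cycle_empty:
  assumes "m > 0"
  shows "\<not> has_berge_cycle {} m"
proof
  assume "has_berge_cycle {} m"
  then obtain E :: "nat \<Rightarrow> nat set" where "\<forall>i<m. E i \<in> {}"
    unfolding has_berge_cycle_def by blast
  then show False using assms by blast
qed

theorem theorem2:
  fixes k n :: nat
  assumes "k \<ge> 2" and "n \<ge> 1"
  shows "ex3_berge n (2 * k) \<le> t_cycle (2 * k) n + ex_cycle n (2 * k)"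
proof -
  have m: "2 * k \<ge> 3" using assms(1) by simp
  have bound: "card H \<le> t_cycle (2 * k) n + ex_cycle n (2 * k)"
    if "hypergraph3 n H" and "\<not> has_berge_cycle H (2 * k)" for H
    using berge_cycle_free_card_le[OF that(1) m that(2)]
      num_triangles_le_t_cycle card_le_ex_cycle by fastforce
  have no_cycle: "\<not> has_berge_cycle {} (2 * k)"
    using m by (intro no_berge_cycle_empty) simp
  have empty: "hypergraph3 n {}" unfolding hypergraph3_def by simp
  show ?thesis
    unfolding ex3_berge_def
    by (rule Max_of_bounded_le[where P = "\<lambda>H. hypergraph3 n H \<and> \<not> has_berge_cycle H (2 * k)"])
      (use empty no_cycle bound in auto)
qed

end
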